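(* $SL_3(\mathfrak{o})$ is the disjoint union $\Delta_2\sqcup\Delta_{1,0}\sqcup\Delta_{1,1}$, where $$\Delta_2=\bigsqcup_{y\in Y(\mathfrak{o})}\bigsqcup_{d\in D(3)}\bigsqcup_{u\in U(3)}\varphi_2(y^{-1})du\Gamma_\infty(3),\quad \Delta_{1,0}=\bigsqcup_{\substack{y_1,y_2\in Y(\mathfrak{o})\\ y_2\neq I_2}}\bigsqcup_{d\in D(3)}\bigsqcup_{u\in U(3)}\varphi_2(y_1^{-1})\varphi_1(y_2^{-1})du\Gamma_\infty(3),$$ $$\Delta_{1,1}=\bigsqcup_{\substack{y_1,y_2,y_3\in Y(\mathfrak{o})\\ y_2,y_3\neq I_2}}\bigsqcup_{d\in D(3)}\bigsqcup_{u\in U(3)}\varphi_2(y_1^{-1})\varphi_1(y_2^{-1})\varphi_2(y_3^{-1})du\Gamma_\infty(3).$$ In particular, all the sets appearing on the right-hand sides are pairwise disjoint and their union is $SL_3(\mathfrak{o})$.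
   Context: Let $\omega=e^{2\pi i/3}$, $\mathfrak{o}=\mathbb{Z}[\omega]$, $\mathfrak{o}^\times$ its unit group. Fix representatives of nonzero elements modulo units ("$c\in(\mathfrak{o}-\{0\})/\mathfrak{o}^\times$") and, for each nonzero $c$, representatives of $\mathfrak{o}/c\mathfrak{o}$ ("$a\in\mathfrak{o}/c\mathfrak{o}$"). $Y(\mathfrak{o})=\{\begin{pmatrix}a&b\\c&d\end{pmatrix}\in SL_2(\mathfrak{o}) : c\in(\mathfrak{o}-\{0\})/\mathfrak{o}^\times,\ a\in\mathfrak{o}/c\mathfrak{o}\}\cup\{I_2\}$. $\Gamma(3)=\{A\in SL_3(\mathfrak{o}):A\equiv I_3\pmod{3\mathfrak{o}}\}$ (entrywise), $\Gamma_\infty(3)$ its subgroup of upper triangular unipotent matrices. $D(3)$: diagonal $\mathrm{diag}(i,j,k)$ with $i,j,k\in\mathfrak{o}$, $ijk=1$. $U(3)$: matrices $\begin{pmatrix}1&\alpha&\beta\\&1&\gamma\\&&1\end{pmatrix}$ with $\alpha,\beta,\gamma\in\{0,1,2\}+\{0,1,2\}\omega$. For $y=\begin{pmatrix}a&b\\c&d\end{pmatrix}\in SL_2(\mathfrak{o})$, $\varphi_1(y)=\begin{pmatrix}a&b&0\\c&d&0\\0&0&1\end{pmatrix}$, $\varphi_2(y)=\begin{pmatrix}1&0&0\\0&a&b\\0&c&d\end{pmatrix}$. For $A=(a_{ij})\in SL_3(\mathfrak{o})$: $\Delta_2=\{A: a_{21}=a_{31}=0\}$, $\Delta_{1,0}=\{A:(a_{21}\neq0\text{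 or }a_{31}\neq0)\text{ and }a_{21}a_{32}-a_{22}a_{31}=0\}$, $\Delta_{1,1}=\{A: a_{21}a_{32}-a_{22}a_{31}\neq0\}$. *)

theory Defs
  imports "HOL-Analysis.Analysis" "HOL-Library.Disjoint_Sets"
begin

type_synonym mat3 = "complex^3^3"
type_synonym mat2 = "complex^2^2"

definition omega :: complex where
  "omega = exp (2 * pi * \<i> / 3)"

definition ZO :: "complex set" where
  "ZO = {of_int a + of_int b * omega | a b. True}"

definition ZO_units :: "complex set" where
  "ZO_units = {u \<in> ZO. \<exists>v \<in> ZO. u * v = 1}"

definition mk3 :: "complex \<Rightarrow> complex \<Rightarrow> complex \<Rightarrow> complex \<Rightarrow> complex \<Rightarrow> complex
    \<Rightarrow> complex \<Rightarrow> complex \<Rightarrow> complex \<Rightarrow> mat3" where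
  "mk3 a11 a12 a13 a21 a22 a23 a31 a32 a33 =
     vector [vector [a11, a12, a13], vector [a21, a22, a23], vector [a31, a32, a33]]"

definition SL3 :: "mat3 set" where
  "SL3 = {A. (\<forall>i j. A $ i $ j \<in> ZO) \<and> det A = 1}"

definition SL2 :: "mat2 set" where
  "SL2 = {A. (\<forall>i j. A $ i $ j \<in> ZO) \<and> det A = 1}"

definition Gamma3 :: "mat3 set" where
  "Gamma3 = {A \<in> SL3. \<forall>i j. \<exists>z \<in> ZO. A $ i $ j - (mat 1 :: mat3) $ i $ j = 3 * z}"

definition Gamma_inf3 :: "mat3 set" where
  "Gamma_inf3 = {A \<in> Gamma3. \<exists>x y z. A = mk3 1 x z 0 1 y 0 0 1}"

definition D3 :: "mat3 set" where
  "D3 = {mk3 i 0 0 0 j 0 0 0 k | i j k. i \<in> ZO \<and> j \<in> ZO \<and> k \<in> ZO \<and> i * j * k = 1}"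

definition R3 :: "complex set" where
  "R3 = {of_nat m + of_nat n * omega | m n. m < (3::nat) \<and> n < 3}"

definition U3 :: "mat3 set" where
  "U3 = {mk3 1 \<alpha> \<beta> 0 1 \<gamma> 0 0 1 | \<alpha> \<beta> \<gamma>. \<alpha> \<in> R3 \<and> \<beta> \<in> R3 \<and> \<gamma> \<in> R3}"

definition phi1 :: "mat2 \<Rightarrow> mat3" where
  "phi1 y = mk3 (y$1$1) (y$1$2) 0 (y$2$1) (y$2$2) 0 0 0 1"

definition phi2 :: "mat2 \<Rightarrow> mat3" where
  "phi2 y = mk3 1 0 0 0 (y$1$1) (y$1$2) 0 (y$2$1) (y$2$2)"

definition valid_reps :: "complex set \<Rightarrow> (complex \<Rightarrow> complex set) \<Rightarrow> bool" where
  "valid_reps C Rep \<longleftrightarrow>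
     C \<subseteq> ZO - {0} \<and>
     (\<forall>x \<in> ZO - {0}. \<exists>!c. c \<in> C \<and> (\<exists>u \<in> ZO_units. x = u * c)) \<and>
     (\<forall>c \<in> C. Rep c \<subseteq> ZO \<and> (\<forall>x \<in> ZO. \<exists>!a. a \<in> Rep c \<and> (\<exists>z \<in> ZO. x - a = c * z)))"

definition Yset :: "complex set \<Rightarrow> (complex \<Rightarrow> complex set) \<Rightarrow> mat2 set" where
  "Yset C Rep = {y \<in> SL2. y $ 2 $ 1 \<in> C \<and> y $ 1 $ 1 \<in> Rep (y $ 2 $ 1)} \<union> {mat 1}"

definition Delta2 :: "mat3 set" where
  "Delta2 = {A \<in> SL3. A$2$1 = 0 \<and> A$3$1 = 0}"

definition Delta10 :: "mat3 set" where
  "Delta10 = {A \<in> SL3. (A$2$1 \<noteq> 0 \<or> A$3$1 \<noteq> 0) \<and> A$2$1 * A$3$2 - A$2$2 * A$3$1 = 0}"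

definition Delta11 :: "mat3 set" where
  "Delta11 = {A \<in> SL3. A$2$1 * A$3$2 - A$2$2 * A$3$1 \<noteq> 0}"

definition coset3 :: "mat3 \<Rightarrow> mat3 set" where
  "coset3 g = {g ** h | h. h \<in> Gamma_inf3}"

end

theory Submission
  imports Defs
begin

text \<open>
  Right multiplication by \<open>\<Gamma>\<^sub>\<infinity>(3)\<close> preserves the first column of a matrix and the
  \<open>2 \<times> 2\<close> minors of its first two columns. Since \<open>\<int>[\<omega>]\<close> is Euclidean, any two entries of a
  column have a gcd, so they can be cleared by an \<open>SL\<^sub>2\<close> matrix with prescribed bottom row,
  and the choice of representatives makes this matrix a unique element of \<open>Y\<close>.
  Clearing the entries \<open>(3,1)\<close>, \<open>(2,1)\<close>, \<open>(3,2)\<close> of \<open>X \<in> SL\<^sub>3\<close> in turn by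
  \<open>\<phi>\<^sub>2(y\<^sub>1)\<close>, \<open>\<phi>\<^sub>1(y\<^sub>2)\<close>, \<open>\<phi>\<^sub>2(y\<^sub>3)\<close> leaves an upper triangular matrix, which is
  \<open>d u h\<close> with \<open>d \<in> D(3)\<close>, \<open>u \<in> U(3)\<close>, \<open>h \<in> \<Gamma>\<^sub>\<infinity>(3)\<close> after reducing its entries
  modulo 3. Conversely, the invariants of the coset
  \<open>\<phi>\<^sub>2(y\<^sub>1\<inverse>) \<phi>\<^sub>1(y\<^sub>2\<inverse>) \<phi>\<^sub>2(y\<^sub>3\<inverse>) d u \<Gamma>\<^sub>\<infinity>(3)\<close> are explicit in the bottom rows
  of the \<open>y\<^sub>i\<close> and the diagonal of \<open>d\<close>; they recover \<open>y\<^sub>1, y\<^sub>2, y\<^sub>3, d\<close>, and then \<open>u\<close> is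
  determined by its entries modulo 3. The entries \<open>(2,1)\<close>, \<open>(3,1)\<close> vanish iff \<open>y\<^sub>2 = I\<close>,
  and the \<open>(2,3)\<close> minor is nonzero iff \<open>y\<^sub>2, y\<^sub>3 \<noteq> I\<close>, which sorts the cells into
  \<open>\<Delta>\<^sub>2\<close>, \<open>\<Delta>\<^sub>1\<^sub>,\<^sub>0\<close> and \<open>\<Delta>\<^sub>1\<^sub>,\<^sub>1\<close>.
\<close>

section \<open>The ring \<open>\<int>[\<omega>]\<close>\<close>

lemma omega_eq: "omega = Complex (-1/2) (sqrt 3 / 2)"
  unfolding omega_def
  by (simp add: Complex_eq exp_eq_polar cis.ctr cos_120' sin_120' mult.commute)

lemma Re_omega [simp]: "Re omega = -1/2" and Im_omega [simp]: "Im omega = sqrt 3 / 2"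
  by (simp_all add: omega_eq)

lemma omega_squared: "omega * omega = -1 - omega"
  by (simp add: complex_eq_iff omega_eq algebra_simps)

lemma ZO_iff: "z \<in> ZO \<longleftrightarrow> (\<exists>a b::int. z = of_int a + of_int b * omega)"
  unfolding ZO_def by auto

lemma ZO_of_int [simp, intro]: "of_int a \<in> ZO"
  unfolding ZO_iff by (rule exI[of _ a], rule exI[of _ 0]) simp

lemma ZO_0 [simp, intro]: "0 \<in> ZO"
  and ZO_1 [simp, intro]: "1 \<in> ZO"
  and ZO_numeral [simp, intro]: "numeral n \<in> ZO"
  using ZO_of_int[of 0] ZO_of_int[of 1] ZO_of_int[of "numeral n"] by simp_all

lemma ZO_omega [simp, intro]: "omega \<in> ZO"
  unfolding ZO_iff by (rule exI[of _ 0], rule exI[of _ 1]) simp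

lemma ZO_add [simp, intro]:
  assumes "x \<in> ZO" "y \<in> ZO"
  shows "x + y \<in> ZO"
proof -
  obtain a b c d where "x = of_int a + of_int b * omega" "y = of_int c + of_int d * omega"
    using assms unfolding ZO_iff by blast
  then have "x + y = of_int (a + c) + of_int (b + d) * omega"
    by (simp add: algebra_simps)
  then show ?thesis
    unfolding ZO_iff by blast
qed

lemma ZO_uminus [simp, intro]:
  assumes "x \<in> ZO"
  shows "- x \<in> ZO"
proof -
  obtain a b where "x = of_int a + of_int b * omega"
    using assms unfolding ZO_iff by blast
  then have "- x = of_int (- a) + of_int (- b) * omega"
    by (simp add: algebra_simps)
  then show ?thesis
    unfolding ZO_iff by blast
qed

lemma ZO_diff [simp, intro]: "x \<in> ZO \<Longrightarrow> y \<in> ZO \<Longrightarrow> x - y \<in> ZO"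
  using ZO_add[of x "- y"] by simp

lemma ZO_mult [simp, intro]:
  assumes "x \<in> ZO" "y \<in> ZO"
  shows "x * y \<in> ZO"
proof -
  obtain a b c d where xy: "x = of_int a + of_int b * omega" "y = of_int c + of_int d * omega"
    using assms unfolding ZO_iff by blast
  have "x * y = of_int a * of_int c + (of_int a * of_int d + of_int b * of_int c) * omega
        + of_int b * of_int d * (omega * omega)"
    by (simp add: xy algebra_simps)
  also have "\<dots> = of_int (a * c - b * d) + of_int (a * d + b * c - b * d) * omega"
    by (simp add: omega_squared algebra_simps)
  finally show ?thesis
    unfolding ZO_iff by blast
qed

lemma ZO_coords_eq_0:
  assumes "of_int p + of_int q * omega = (0::complex)"
  shows "p = 0" "q = 0"
proof -
  have "of_int q * (sqrt 3 / 2) = Im (of_int p + of_int q * omega)"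
    by simp
  then show "q = 0"
    using assms by simp
  with assms show "p = 0"
    by simp
qed

lemma ZO_norm_square_nat:
  assumes "z \<in> ZO"
  obtains n :: nat where "(cmod z)\<^sup>2 = real n"
proof -
  obtain a b where z: "z = of_int a + of_int b * omega"
    using assms unfolding ZO_iff by blast
  have "(cmod z)\<^sup>2 = of_int (a\<^sup>2 - a * b + b\<^sup>2)"
    unfolding z cmod_power2 by (simp add: power2_eq_square algebra_simps)
  moreover have "0 \<le> a\<^sup>2 - a * b + b\<^sup>2"
  proof -
    have "0 \<le> (a - b)\<^sup>2 + a\<^sup>2 + b\<^sup>2"
      by simp
    then show ?thesis
      by (simp add: power2_eq_square algebra_simps)
  qed
  ultimately show ?thesis
    using that by (metis of_int_of_nat_eq nonneg_int_cases)
qed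

lemma ZO_nearest: "\<exists>q\<in>ZO. cmod (w - q) < 1"
proof -
  \<comment> \<open>coordinates of \<open>w\<close> in the basis \<open>1, \<omega>\<close>, rounded to the nearest integers\<close>
  define v where "v = Im w * 2 / sqrt 3"
  define u where "u = Re w + v / 2"
  define e1 where "e1 = u - of_int (round u)"
  define e2 where "e2 = v - of_int (round v)"
  define q where "q = of_int (round u) + of_int (round v) * omega"
  have e1: "\<bar>e1\<bar> \<le> 1/2" and e2: "\<bar>e2\<bar> \<le> 1/2"
    unfolding e1_def e2_def using of_int_round_abs_le[of u] of_int_round_abs_le[of v] by linarith+
  have "w - q = of_real e1 + of_real e2 * omega"
    by (simp add: q_def e1_def e2_def u_def v_def complex_eq_iff algebra_simps)
  then have "(cmod (w - q))\<^sup>2 = e1\<^sup>2 - e1 * e2 + e2\<^sup>2"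
    unfolding cmod_power2 by (simp add: power2_eq_square algebra_simps)
  also have "\<dots> < 1"
  proof -
    have "e1\<^sup>2 \<le> (1/2)\<^sup>2" "e2\<^sup>2 \<le> (1/2)\<^sup>2"
      using e1 e2 by (simp_all add: abs_le_square_iff[symmetric])
    moreover have "\<bar>e1 * e2\<bar> \<le> 1/2 * (1/2)"
      unfolding abs_mult using e1 e2 by (intro mult_mono) auto
    ultimately show ?thesis
      by (simp add: power2_eq_square)
  qed
  finally have "cmod (w - q) < 1"
    by (simp add: power_less_one_iff abs_square_less_1)
  moreover have "q \<in> ZO"
    unfolding q_def by blast
  ultimately show ?thesis
    by blast
qed

lemma ZO_euclidean_division:
  assumes "x \<in> ZO" "y \<in> ZO" "y \<noteq> 0"
  obtains q where "q \<in> ZO" "cmod (x - q * y) < cmod y"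
proof -
  obtain q where q: "q \<in> ZO" "cmod (x / y - q) < 1"
    using ZO_nearest by blast
  have "x - q * y = (x / y - q) * y"
    using assms(3) by (simp add: field_simps)
  then have "cmod (x - q * y) = cmod (x / y - q) * cmod y"
    by (simp add: norm_mult)
  also have "\<dots> < cmod y"
    using q(2) assms(3) by simp
  finally show ?thesis
    using that q(1) by blast
qed

definition ZO_coprime :: "complex \<Rightarrow> complex \<Rightarrow> bool" where
  "ZO_coprime a b \<longleftrightarrow> (\<exists>p\<in>ZO. \<exists>q\<in>ZO. p * a + q * b = 1)"

lemma ZO_exists_least_norm:
  assumes "I \<subseteq> ZO" "w \<in> I" "w \<noteq> 0"
  shows "\<exists>g\<in>I. g \<noteq> 0 \<and> (\<forall>w\<in>I. w \<noteq> 0 \<longrightarrow> cmod g \<le> cmod w)"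
proof -
  define P where "P n \<longleftrightarrow> (\<exists>w\<in>I. w \<noteq> 0 \<and> (cmod w)\<^sup>2 = real n)" for n
  obtain n where "(cmod w)\<^sup>2 = real n"
    using ZO_norm_square_nat assms by blast
  then have "\<exists>n. P n"
    unfolding P_def using assms(2,3) by blast
  then obtain n where "P n" and least: "\<And>m. m < n \<Longrightarrow> \<not> P m"
    using exists_least_iff[of P] by blast
  then obtain g where g: "g \<in> I" "g \<noteq> 0" "(cmod g)\<^sup>2 = real n"
    unfolding P_def by blast
  have minimal: "cmod g \<le> cmod w'" if w': "w' \<in> I" "w' \<noteq> 0" for w'
  proof (rule ccontr)
    assume "\<not> cmod g \<le> cmod w'"
    then have "(cmod w')\<^sup>2 < (cmod g)\<^sup>2"
      by (simp add: power_strict_mono)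
    moreover obtain m where m: "(cmod w')\<^sup>2 = real m"
      using ZO_norm_square_nat assms(1) w'(1) by blast
    ultimately have "m < n"
      using g(3) by simp
    moreover have "P m"
      unfolding P_def using w' m by blast
    ultimately show False
      using least by blast
  qed
  with g(1,2) show ?thesis
    by blast
qed

lemma ZO_coprime_factorization:
  assumes x: "x \<in> ZO" and z: "z \<in> ZO" and nz: "x \<noteq> 0 \<or> z \<noteq> 0"
  obtains g e f where "g \<noteq> 0" "e \<in> ZO" "f \<in> ZO" "x = g * e" "z = g * f" "ZO_coprime e f"
proof -
  define I where "I = {p * x + q * z | p q. p \<in> ZO \<and> q \<in> ZO}"
  have I_ZO: "I \<subseteq> ZO"
    using x z unfolding I_def by blast
  have I_diff: "w - e * w' \<in> I" if ww': "w \<in> I" "w' \<in> I" and e: "e \<in> ZO" for w w' e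
  proof -
    obtain p q p' q' where "p \<in> ZO" "q \<in> ZO" "p' \<in> ZO" "q' \<in> ZO"
      "w = p * x + q * z" "w' = p' * x + q' * z"
      using ww' unfolding I_def by blast
    moreover have "p * x + q * z - e * (p' * x + q' * z) = (p - e * p') * x + (q - e * q') * z"
      by (simp add: algebra_simps)
    ultimately show ?thesis
      using e unfolding I_def by auto
  qed
  have "x = 1 * x + 0 * z" "z = 0 * x + 1 * z"
    by simp_all
  then have x_I: "x \<in> I" and z_I: "z \<in> I"
    unfolding I_def by blast+
  \<comment> \<open>an element of least norm generates the ideal \<open>I\<close>\<close>
  obtain w0 where "w0 \<in> I" "w0 \<noteq> 0"
    using nz x_I z_I by blast
  then obtain g where g: "g \<in> I" "g \<noteq> 0" and least: "\<forall>w\<in>I. w \<noteq> 0 \<longrightarrow> cmod g \<le> cmod w"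
    using ZO_exists_least_norm[OF I_ZO] by blast
  have g_dvd: "\<exists>e\<in>ZO. w = g * e" if w: "w \<in> I" for w
  proof -
    obtain e where e: "e \<in> ZO" "cmod (w - e * g) < cmod g"
      using ZO_euclidean_division[OF subsetD[OF I_ZO w] subsetD[OF I_ZO g(1)] g(2)] by blast
    have "w - e * g = 0"
    proof (rule ccontr)
      assume "w - e * g \<noteq> 0"
      then have "cmod g \<le> cmod (w - e * g)"
        using least I_diff[OF w g(1) e(1)] by blast
      with e(2) show False
        by simp
    qed
    then show ?thesis
      using e(1) by (auto simp: algebra_simps)
  qed
  obtain e f where ef: "e \<in> ZO" "f \<in> ZO" "x = g * e" "z = g * f"
    using g_dvd[OF x_I] g_dvd[OF z_I] by blast
  obtain p q where pq: "p \<in> ZO" "q \<in> ZO" "g = p * x + q * z"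
    using g(1) unfolding I_def by blast
  have "g * (p * e + q * f) = g * 1"
    using pq(3) ef(3,4) by algebra
  then have "ZO_coprime e f"
    unfolding ZO_coprime_def using pq(1,2) g(2) by auto
  with g(2) ef show ?thesis
    using that by blast
qed

lemma ZO_coprime_dvd:
  assumes "ZO_coprime c d" "x \<in> ZO" "w \<in> ZO" "x * d = c * w"
  shows "\<exists>z\<in>ZO. x = c * z"
proof -
  obtain p q where pq: "p \<in> ZO" "q \<in> ZO" "p * c + q * d = 1"
    using assms(1) unfolding ZO_coprime_def by blast
  have "x = x * (p * c + q * d)"
    using pq(3) by simp
  also have "\<dots> = c * (x * p + q * w)"
    using assms(4) by (simp add: algebra_simps)
  finally show ?thesis
    using assms(2,3) pq(1,2) by blast
qed

lemma ZO_coprime_proportional: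
  assumes "ZO_coprime a b" "a' \<in> ZO" "b' \<in> ZO" "a * b' = a' * b"
  shows "\<exists>s\<in>ZO. a' = s * a \<and> b' = s * b"
proof -
  obtain p q where pq: "p \<in> ZO" "q \<in> ZO" "p * a + q * b = 1"
    using assms(1) unfolding ZO_coprime_def by blast
  have "a' = (p * a' + q * b') * a" "b' = (p * a' + q * b') * b"
    using pq(3) assms(4) by algebra+
  then show ?thesis
    using pq(1,2) assms(2,3) by blast
qed

lemma R3_subset_ZO: "R3 \<subseteq> ZO"
proof
  fix r
  assume "r \<in> R3"
  then obtain m n :: nat where "r = of_nat m + of_nat n * omega"
    unfolding R3_def by blast
  then have "r = of_int (int m) + of_int (int n) * omega"
    by simp
  then show "r \<in> ZO"
    unfolding ZO_iff by blast
qed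

lemma R3_residue_exists:
  assumes "z \<in> ZO"
  obtains r w where "r \<in> R3" "w \<in> ZO" "z - r = 3 * w"
proof -
  obtain a b where z: "z = of_int a + of_int b * omega"
    using assms unfolding ZO_iff by blast
  define r where "r = of_nat (nat (a mod 3)) + of_nat (nat (b mod 3)) * omega"
  define w where "w = of_int (a div 3) + of_int (b div 3) * omega"
  have "r \<in> R3"
    unfolding r_def R3_def by (rule CollectI, rule exI[of _ "nat (a mod 3)"],
        rule exI[of _ "nat (b mod 3)"]) auto
  moreover have "w \<in> ZO"
    unfolding w_def ZO_iff by blast
  moreover have "z - r = 3 * w"
  proof -
    have "a = 3 * (a div 3) + a mod 3" "b = 3 * (b div 3) + b mod 3"
      by simp_all
    then have "(of_int a :: complex) = 3 * of_int (a div 3) + of_int (a mod 3)"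
      "(of_int b :: complex) = 3 * of_int (b div 3) + of_int (b mod 3)"
      by (metis of_int_add of_int_mult of_int_numeral)+
    moreover have "of_nat (nat (a mod 3)) = (of_int (a mod 3) :: complex)"
      "of_nat (nat (b mod 3)) = (of_int (b mod 3) :: complex)"
      by simp_all
    ultimately show ?thesis
      unfolding z r_def w_def by (simp add: algebra_simps)
  qed
  ultimately show ?thesis
    using that by blast
qed

lemma R3_residue_unique:
  assumes "r \<in> R3" "r' \<in> R3" "w \<in> ZO" "r - r' = 3 * w"
  shows "r = r'"
proof -
  obtain m n :: nat where r: "r = of_nat m + of_nat n * omega" "m < 3" "n < 3"
    using assms(1) unfolding R3_def by blast
  obtain m' n' :: nat where r': "r' = of_nat m' + of_nat n' * omega" "m' < 3" "n' < 3"
    using assms(2) unfolding R3_def by blast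
  obtain a b where w: "w = of_int a + of_int b * omega"
    using assms(3) unfolding ZO_iff by blast
  have "of_int (int m - int m' - 3 * a) + of_int (int n - int n' - 3 * b) * omega = (0::complex)"
    using assms(4) unfolding r r' w by (simp add: algebra_simps)
  then have "int m - int m' - 3 * a = 0" "int n - int n' - 3 * b = 0"
    by (rule ZO_coords_eq_0)+
  then have "m = m'" "n = n'"
    using r(2,3) r'(2,3) by presburger+
  then show ?thesis
    using r r' by simp
qed


section \<open>Explicit matrices\<close>

definition mk2 :: "complex \<Rightarrow> complex \<Rightarrow> complex \<Rightarrow> complex \<Rightarrow> mat2" where
  "mk2 a b c d = vector [vector [a, b], vector [c, d]]"

lemma mk2_nth [simp]:
  "mk2 a b c d $ 1 $ 1 = a" "mk2 a b c d $ 1 $ 2 = b"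
  "mk2 a b c d $ 2 $ 1 = c" "mk2 a b c d $ 2 $ 2 = d"
  by (simp_all add: mk2_def)

lemma mk3_nth [simp]:
  "mk3 a11 a12 a13 a21 a22 a23 a31 a32 a33 $ 1 $ 1 = a11"
  "mk3 a11 a12 a13 a21 a22 a23 a31 a32 a33 $ 1 $ 2 = a12"
  "mk3 a11 a12 a13 a21 a22 a23 a31 a32 a33 $ 1 $ 3 = a13"
  "mk3 a11 a12 a13 a21 a22 a23 a31 a32 a33 $ 2 $ 1 = a21"
  "mk3 a11 a12 a13 a21 a22 a23 a31 a32 a33 $ 2 $ 2 = a22"
  "mk3 a11 a12 a13 a21 a22 a23 a31 a32 a33 $ 2 $ 3 = a23"
  "mk3 a11 a12 a13 a21 a22 a23 a31 a32 a33 $ 3 $ 1 = a31"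
  "mk3 a11 a12 a13 a21 a22 a23 a31 a32 a33 $ 3 $ 2 = a32"
  "mk3 a11 a12 a13 a21 a22 a23 a31 a32 a33 $ 3 $ 3 = a33"
  by (simp_all add: mk3_def)

lemma mat2_eq_mk2: "(y::mat2) = mk2 (y$1$1) (y$1$2) (y$2$1) (y$2$2)"
  by (simp add: vec_eq_iff forall_2)

lemma mat3_eq_mk3:
  "(A::mat3) = mk3 (A$1$1) (A$1$2) (A$1$3) (A$2$1) (A$2$2) (A$2$3) (A$3$1) (A$3$2) (A$3$3)"
  by (simp add: vec_eq_iff forall_3)

lemma mk3_eq_iff:
  "mk3 a11 a12 a13 a21 a22 a23 a31 a32 a33 = mk3 b11 b12 b13 b21 b22 b23 b31 b32 b33 \<longleftrightarrow>
    a11 = b11 \<and> a12 = b12 \<and> a13 = b13 \<and> a21 = b21 \<and> a22 = b22 \<and> a23 = b23 \<and>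
    a31 = b31 \<and> a32 = b32 \<and> a33 = b33"
  by (metis mk3_nth)

lemma mk2_mult:
  "mk2 a b c d ** mk2 a' b' c' d' = mk2 (a*a' + b*c') (a*b' + b*d') (c*a' + d*c') (c*b' + d*d')"
  by (simp add: vec_eq_iff forall_2 matrix_matrix_mult_def sum_2)

lemma mk3_mult:
  "mk3 a11 a12 a13 a21 a22 a23 a31 a32 a33 ** mk3 b11 b12 b13 b21 b22 b23 b31 b32 b33 =
   mk3 (a11*b11 + a12*b21 + a13*b31) (a11*b12 + a12*b22 + a13*b32) (a11*b13 + a12*b23 + a13*b33)
       (a21*b11 + a22*b21 + a23*b31) (a21*b12 + a22*b22 + a23*b32) (a21*b13 + a22*b23 + a23*b33)
       (a31*b11 + a32*b21 + a33*b31) (a31*b12 + a32*b22 + a33*b32) (a31*b13 + a32*b23 + a33*b33)"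
  by (simp add: vec_eq_iff forall_3 matrix_matrix_mult_def sum_3)

lemma mat1_eq_mk2: "(mat 1 :: mat2) = mk2 1 0 0 1"
  by (simp add: vec_eq_iff forall_2 mat_def)

lemma mat1_eq_mk3: "(mat 1 :: mat3) = mk3 1 0 0 0 1 0 0 0 1"
  by (simp add: vec_eq_iff forall_3 mat_def)

lemma det_mk3:
  "det (mk3 a11 a12 a13 a21 a22 a23 a31 a32 a33) =
     a11*a22*a33 + a12*a23*a31 + a13*a21*a32 - a11*a23*a32 - a12*a21*a33 - a13*a22*a31"
  by (simp add: det_3 algebra_simps)

lemma SL2_iff:
  "y \<in> SL2 \<longleftrightarrow> y$1$1 \<in> ZO \<and> y$1$2 \<in> ZO \<and> y$2$1 \<in> ZO \<and> y$2$2 \<in> ZO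
     \<and> y$1$1 * y$2$2 - y$1$2 * y$2$1 = 1"
  unfolding SL2_def by (simp add: forall_2 det_2)

lemma SL2_det: "y \<in> SL2 \<Longrightarrow> det y = 1"
  unfolding SL2_def by simp

lemma SL3_mk3:
  "mk3 a11 a12 a13 a21 a22 a23 a31 a32 a33 \<in> SL3 \<longleftrightarrow>
     a11 \<in> ZO \<and> a12 \<in> ZO \<and> a13 \<in> ZO \<and> a21 \<in> ZO \<and> a22 \<in> ZO \<and> a23 \<in> ZO \<and>
     a31 \<in> ZO \<and> a32 \<in> ZO \<and> a33 \<in> ZO \<and>
     a11*a22*a33 + a12*a23*a31 + a13*a21*a32 - a11*a23*a32 - a12*a21*a33 - a13*a22*a31 = 1"
  unfolding SL3_def by (simp add: forall_3 det_mk3)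

lemma SL3_entry: "X \<in> SL3 \<Longrightarrow> X$i$j \<in> ZO"
  unfolding SL3_def by blast

lemma SL3_mult:
  assumes "A \<in> SL3" "B \<in> SL3"
  shows "A ** B \<in> SL3"
proof -
  have "(A ** B)$i$j \<in> ZO" for i j
    using SL3_entry[OF assms(1)] SL3_entry[OF assms(2)] by (simp add: matrix_matrix_mult_def sum_3)
  with assms show ?thesis
    unfolding SL3_def by (simp add: det_mul)
qed

lemma matrix_inv_mult_left:
  fixes A :: "'a::field^'n^'n"
  assumes "det A \<noteq> 0"
  shows "matrix_inv A ** A = mat 1"
proof -
  have "\<exists>A'. A ** A' = mat 1 \<and> A' ** A = mat 1"
    using assms invertible_det_nz unfolding invertible_def by blast
  then show ?thesis
    unfolding matrix_inv_def by (rule someI2_ex) blast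
qed

lemma SL3_mult_left_cancel:
  assumes "P \<in> SL3" "P ** A = P ** B"
  shows "A = B"
proof -
  have inv: "matrix_inv P ** P = mat 1"
    using assms(1) unfolding SL3_def by (simp add: matrix_inv_mult_left)
  have "A = (matrix_inv P ** P) ** A"
    unfolding inv by simp
  also have "\<dots> = (matrix_inv P ** P) ** B"
    using assms(2) by (simp flip: matrix_mul_assoc)
  finally show ?thesis
    unfolding inv by simp
qed

lemma matrix_inv_mat2:
  assumes "det y = 1"
  shows "matrix_inv y = mk2 (y$2$2) (- y$1$2) (- y$2$1) (y$1$1)"
proof -
  let ?B = "mk2 (y$2$2) (- y$1$2) (- y$2$1) (y$1$1)"
  have "y ** ?B = mat 1"
    using assms by (subst mat2_eq_mk2[of y]) (simp add: det_2 mk2_mult mat1_eq_mk2 algebra_simps)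
  then have "matrix_inv y = (matrix_inv y ** y) ** ?B"
    by (simp flip: matrix_mul_assoc)
  also have "\<dots> = ?B"
    using assms by (simp add: matrix_inv_mult_left)
  finally show ?thesis .
qed

lemma matrix_inv_mat1: "matrix_inv (mat 1 :: mat2) = mat 1"
  using matrix_inv_mat2[of "mat 1"] by (simp add: mat1_eq_mk2 det_2)

lemma SL2_matrix_inv: "y \<in> SL2 \<Longrightarrow> matrix_inv y \<in> SL2"
  by (simp add: SL2_det matrix_inv_mat2) (simp add: SL2_iff algebra_simps)

lemma phi1_mk2 [simp]: "phi1 (mk2 a b c d) = mk3 a b 0 c d 0 0 0 1"
  by (simp add: phi1_def)

lemma phi2_mk2 [simp]: "phi2 (mk2 a b c d) = mk3 1 0 0 0 a b 0 c d"
  by (simp add: phi2_def)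

lemma phi1_mat1 [simp]: "phi1 (mat 1) = mat 1"
  and phi2_mat1 [simp]: "phi2 (mat 1) = mat 1"
  by (simp_all add: mat1_eq_mk2 mat1_eq_mk3)

lemma mat2_mult_nth: "((x::mat2) ** y)$i$j = x$i$1 * y$1$j + x$i$2 * y$2$j"
  by (simp add: matrix_matrix_mult_def sum_2)

lemma phi1_mult: "phi1 (x ** y) = phi1 x ** phi1 y"
  and phi2_mult: "phi2 (x ** y) = phi2 x ** phi2 y"
  by (simp_all add: phi1_def phi2_def mk3_mult mat2_mult_nth)

lemma phi_matrix_inv_cancel:
  assumes "det y = 1"
  shows "phi1 (matrix_inv y) ** phi1 y = mat 1" "phi2 (matrix_inv y) ** phi2 y = mat 1"
  using matrix_inv_mult_left[of y] assms by (simp_all flip: phi1_mult phi2_mult)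

lemma phi_SL3:
  assumes "y \<in> SL2"
  shows "phi1 y \<in> SL3" "phi2 y \<in> SL3"
  using assms by (subst mat2_eq_mk2, simp add: SL3_mk3 SL2_iff algebra_simps)+

lemma phi1_mult_entries:
  "(phi1 y ** X)$1$j = y$1$1 * X$1$j + y$1$2 * X$2$j"
  "(phi1 y ** X)$2$j = y$2$1 * X$1$j + y$2$2 * X$2$j"
  "(phi1 y ** X)$3$j = X$3$j"
  by (simp_all add: phi1_def matrix_matrix_mult_def sum_3)

lemma phi2_mult_entries:
  "(phi2 y ** X)$1$j = X$1$j"
  "(phi2 y ** X)$2$j = y$1$1 * X$2$j + y$1$2 * X$3$j"
  "(phi2 y ** X)$3$j = y$2$1 * X$2$j + y$2$2 * X$3$j"
  by (simp_all add: phi2_def matrix_matrix_mult_def sum_3)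

lemma D3E:
  assumes "d \<in> D3"
  obtains i j k where "i \<in> ZO" "j \<in> ZO" "k \<in> ZO" "i * j * k = 1" "d = mk3 i 0 0 0 j 0 0 0 k"
  using assms unfolding D3_def by blast

lemma U3E:
  assumes "u \<in> U3"
  obtains \<alpha> \<beta> \<gamma> where "\<alpha> \<in> R3" "\<beta> \<in> R3" "\<gamma> \<in> R3" "u = mk3 1 \<alpha> \<beta> 0 1 \<gamma> 0 0 1"
  using assms unfolding U3_def by blast

lemma Gamma_inf3E:
  assumes "h \<in> Gamma_inf3"
  obtains x y z where "x \<in> ZO" "y \<in> ZO" "z \<in> ZO" "h = mk3 1 (3 * x) (3 * z) 0 1 (3 * y) 0 0 1"
proof -
  obtain a b c where h: "h = mk3 1 a c 0 1 b 0 0 1"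
    using assms unfolding Gamma_inf3_def by blast
  have "\<forall>i j. \<exists>z\<in>ZO. h $ i $ j - (mat 1 :: mat3) $ i $ j = 3 * z"
    using assms unfolding Gamma_inf3_def Gamma3_def by blast
  then have "\<exists>x\<in>ZO. a = 3 * x" "\<exists>y\<in>ZO. b = 3 * y" "\<exists>z\<in>ZO. c = 3 * z"
    unfolding h mat1_eq_mk3 by (metis diff_zero mk3_nth)+
  then show ?thesis
    using that h by blast
qed

lemma Gamma_inf3I:
  assumes "x \<in> ZO" "y \<in> ZO" "z \<in> ZO"
  shows "mk3 1 (3 * x) (3 * z) 0 1 (3 * y) 0 0 1 \<in> Gamma_inf3"
proof -
  let ?h = "mk3 1 (3 * x) (3 * z) 0 1 (3 * y) 0 0 1"
  have "?h \<in> SL3"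
    unfolding SL3_mk3 using assms by auto
  moreover have "\<forall>i j. \<exists>w\<in>ZO. ?h $ i $ j - (mat 1 :: mat3) $ i $ j = 3 * w"
    by (simp add: mat1_eq_mk3 forall_3) (use assms in \<open>auto intro: bexI[of _ 0]\<close>)
  ultimately show ?thesis
    unfolding Gamma_inf3_def Gamma3_def by blast
qed

lemma D3_SL3: "d \<in> D3 \<Longrightarrow> d \<in> SL3"
  by (elim D3E) (simp add: SL3_mk3 mult.assoc)

lemma U3_SL3: "u \<in> U3 \<Longrightarrow> u \<in> SL3"
  using R3_subset_ZO by (elim U3E) (auto simp: SL3_mk3)

lemma Gamma_inf3_SL3: "h \<in> Gamma_inf3 \<Longrightarrow> h \<in> SL3"
  unfolding Gamma_inf3_def Gamma3_def by blast


section \<open>The representatives \<open>Y\<close>\<close>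

lemma valid_reps_C_subset: "valid_reps C Rep \<Longrightarrow> C \<subseteq> ZO - {0}"
  unfolding valid_reps_def by blast

lemma valid_reps_Rep_subset: "valid_reps C Rep \<Longrightarrow> c \<in> C \<Longrightarrow> Rep c \<subseteq> ZO"
  unfolding valid_reps_def by blast

lemma valid_reps_C_Ex1:
  assumes "valid_reps C Rep" "x \<in> ZO - {0}"
  shows "\<exists>!c. c \<in> C \<and> (\<exists>u\<in>ZO_units. x = u * c)"
proof -
  have "\<forall>x\<in>ZO - {0}. \<exists>!c. c \<in> C \<and> (\<exists>u\<in>ZO_units. x = u * c)"
    using assms(1) unfolding valid_reps_def by (elim conjE)
  then show ?thesis
    using assms(2) by (rule bspec)
qed

lemma valid_reps_Rep_Ex1:
  assumes "valid_reps C Rep" "c \<in> C" "x \<in> ZO"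
  shows "\<exists>!a. a \<in> Rep c \<and> (\<exists>z\<in>ZO. x - a = c * z)"
proof -
  have "\<forall>c\<in>C. Rep c \<subseteq> ZO \<and> (\<forall>x\<in>ZO. \<exists>!a. a \<in> Rep c \<and> (\<exists>z\<in>ZO. x - a = c * z))"
    using assms(1) unfolding valid_reps_def by (elim conjE)
  then show ?thesis
    using assms(2,3) by blast
qed

lemma valid_reps_C_exists:
  assumes "valid_reps C Rep" "x \<in> ZO" "x \<noteq> 0"
  obtains c u where "c \<in> C" "u \<in> ZO_units" "x = u * c"
  using valid_reps_C_Ex1[of C Rep x] assms that by blast

lemma valid_reps_C_unique:
  assumes vr: "valid_reps C Rep" and "c \<in> C" "c' \<in> C" "u \<in> ZO_units" "c' = u * c"
  shows "c' = c"
proof -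
  have "1 \<in> ZO_units"
    unfolding ZO_units_def by force
  moreover have "c' \<in> ZO - {0}"
    using assms(3) valid_reps_C_subset[OF vr] by blast
  ultimately show ?thesis
    using valid_reps_C_Ex1[OF vr] assms(2-5) by (metis mult_1)
qed

lemma valid_reps_Rep_exists:
  assumes "valid_reps C Rep" "c \<in> C" "x \<in> ZO"
  obtains a z where "a \<in> Rep c" "z \<in> ZO" "x - a = c * z"
  using valid_reps_Rep_Ex1[OF assms] that by blast

lemma valid_reps_Rep_unique:
  assumes vr: "valid_reps C Rep" and "c \<in> C" "a \<in> Rep c" "a' \<in> Rep c" "z \<in> ZO" "a - a' = c * z"
  shows "a = a'"
proof -
  have "a \<in> ZO"
    using assms(2,3) valid_reps_Rep_subset[OF vr] by blast
  moreover have "a - a = c * 0"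
    by simp
  ultimately show ?thesis
    using valid_reps_Rep_Ex1[OF vr assms(2)] assms(3-6) ZO_0 by blast
qed

lemma mat1_Yset [simp]: "mat 1 \<in> Yset C Rep"
  unfolding Yset_def by simp

lemma Yset_SL2: "y \<in> Yset C Rep \<Longrightarrow> y \<in> SL2"
  unfolding Yset_def by (auto simp: SL2_iff mat1_eq_mk2)

lemma Yset_bottom_row_in_reps:
  "y \<in> Yset C Rep \<Longrightarrow> y \<noteq> mat 1 \<Longrightarrow> y$2$1 \<in> C \<and> y$1$1 \<in> Rep (y$2$1)"
  unfolding Yset_def by auto

lemma Yset_eq_mat1_iff:
  assumes "valid_reps C Rep" "y \<in> Yset C Rep"
  shows "y = mat 1 \<longleftrightarrow> y$2$1 = 0"
  using Yset_bottom_row_in_reps[OF assms(2)] valid_reps_C_subset[OF assms(1)]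
  by (auto simp: mat1_eq_mk2)

lemma SL2_bottom_row_coprime: "y \<in> SL2 \<Longrightarrow> ZO_coprime (y$2$1) (y$2$2)"
  unfolding ZO_coprime_def SL2_iff
  by (rule bexI[of _ "- y$1$2"], rule bexI[of _ "y$1$1"]) (auto simp: algebra_simps)

lemma SL2_bottom_row_nonzero: "y \<in> SL2 \<Longrightarrow> y$2$1 \<noteq> 0 \<or> y$2$2 \<noteq> 0"
  unfolding SL2_iff by auto

lemma Yset_bottom_row_exists:
  assumes vr: "valid_reps C Rep" and "c \<in> ZO" "d \<in> ZO" "c \<noteq> 0" and cd: "ZO_coprime c d"
  obtains y s where "y \<in> Yset C Rep" "s \<noteq> 0" "y$2$1 = s * c" "y$2$2 = s * d"
proof -
  obtain c' u where c': "c' \<in> C" "u \<in> ZO_units" "c = u * c'"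
    using valid_reps_C_exists[OF vr assms(2,4)] .
  obtain v where v: "u \<in> ZO" "v \<in> ZO" "u * v = 1"
    using c'(2) unfolding ZO_units_def by blast
  define d' where "d' = v * d"
  have c'_eq: "c' = v * c"
    using c'(3) v(3) by (simp add: algebra_simps)
  obtain p q where pq: "p \<in> ZO" "q \<in> ZO" "p * c + q * d = 1"
    using cd unfolding ZO_coprime_def by blast
  \<comment> \<open>complete the bottom row \<open>(c', d')\<close> to a matrix of \<open>SL2\<close> whose top left entry
    is reduced mod \<open>c'\<close>\<close>
  obtain a z where az: "a \<in> Rep c'" "z \<in> ZO" "q * u - a = c' * z"
    using valid_reps_Rep_exists[OF vr c'(1)] pq(2) v(1) by blast
  define b where "b = - (p * u + z * d')"
  have "a * d' - b * c' = 1"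
    using az(3) pq(3) v(3) unfolding b_def d'_def c'_eq by algebra
  moreover have "a \<in> ZO" "c' \<in> ZO" "b \<in> ZO" "d' \<in> ZO"
    using az(1,2) valid_reps_Rep_subset[OF vr c'(1)] valid_reps_C_subset[OF vr] c'(1) pq v assms(3)
    unfolding b_def d'_def by auto
  ultimately have "mk2 a b c' d' \<in> SL2"
    unfolding SL2_iff by simp
  then have "mk2 a b c' d' \<in> Yset C Rep"
    unfolding Yset_def using c'(1) az(1) by simp
  moreover have "v \<noteq> 0"
    using v(3) by auto
  ultimately show ?thesis
    using that[of "mk2 a b c' d'" v] by (simp add: c'_eq d'_def)
qed

lemma Yset_annihilator:
  assumes vr: "valid_reps C Rep" and "a \<in> ZO" "b \<in> ZO"
  obtains y where "y \<in> Yset C Rep" "y$2$1 * a + y$2$2 * b = 0" "y = mat 1 \<longleftrightarrow> b = 0"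
proof (cases "b = 0")
  case True
  have "(mat 1 :: mat2)$2$1 = 0"
    by (simp add: mat1_eq_mk2)
  with True show ?thesis
    using that[of "mat 1"] by simp
next
  case False
  obtain g e f where gef: "g \<noteq> 0" "e \<in> ZO" "f \<in> ZO" "a = g * e" "b = g * f" "ZO_coprime e f"
    using ZO_coprime_factorization[OF assms(2,3)] False by metis
  have "ZO_coprime f (- e)"
    using gef(6) unfolding ZO_coprime_def by (metis add.commute minus_mult_minus ZO_uminus)
  moreover have "f \<noteq> 0"
    using False gef(5) by simp
  ultimately obtain y s where y: "y \<in> Yset C Rep" "s \<noteq> 0" "y$2$1 = s * f" "y$2$2 = s * - e"
    using Yset_bottom_row_exists[OF vr gef(3)] gef(2) by (metis ZO_uminus)
  have "y$2$1 * a + y$2$2 * b = 0"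
    unfolding y(3,4) gef(4,5) by (simp add: algebra_simps)
  moreover have "y \<noteq> mat 1"
    using y(2,3) \<open>f \<noteq> 0\<close> by (auto simp: mat1_eq_mk2)
  ultimately show ?thesis
    using that y(1) False by blast
qed

lemma Yset_eq_if_bottom_rows_eq:
  assumes vr: "valid_reps C Rep" and y: "y \<in> Yset C Rep" and y': "y' \<in> Yset C Rep"
    and c: "y$2$1 = y'$2$1" and d: "y$2$2 = y'$2$2"
  shows "y = y'"
proof (cases "y$2$1 = 0")
  case True
  then show ?thesis
    using Yset_eq_mat1_iff[OF vr y] Yset_eq_mat1_iff[OF vr y'] c by simp
next
  case False
  then have "y \<noteq> mat 1" "y' \<noteq> mat 1"
    using c Yset_eq_mat1_iff[OF vr y] Yset_eq_mat1_iff[OF vr y'] by auto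
  then have C: "y$2$1 \<in> C" "y$1$1 \<in> Rep (y$2$1)" "y'$1$1 \<in> Rep (y$2$1)"
    using Yset_bottom_row_in_reps[OF y] Yset_bottom_row_in_reps[OF y'] unfolding c by auto
  have S: "y \<in> SL2" "y' \<in> SL2"
    using y y' by (simp_all add: Yset_SL2)
  \<comment> \<open>equal bottom rows force the top left entries to agree modulo the bottom left one\<close>
  have det: "y$1$1 * y$2$2 - y$1$2 * y$2$1 = 1" "y'$1$1 * y'$2$2 - y'$1$2 * y'$2$1 = 1"
    using S unfolding SL2_iff by simp_all
  then have "(y$1$1 - y'$1$1) * y$2$2 = y$2$1 * (y$1$2 - y'$1$2)"
    using c d by algebra
  moreover have "y$1$1 - y'$1$1 \<in> ZO" "y$1$2 - y'$1$2 \<in> ZO"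
    using S unfolding SL2_iff by simp_all
  ultimately obtain z where "z \<in> ZO" "y$1$1 - y'$1$1 = y$2$1 * z"
    using ZO_coprime_dvd[OF SL2_bottom_row_coprime[OF S(1)]] by blast
  then have a: "y$1$1 = y'$1$1"
    using valid_reps_Rep_unique[OF vr C] by blast
  have "y$1$2 * y$2$1 = y'$1$2 * y$2$1"
    using det a c d by algebra
  then have "y$1$2 = y'$1$2"
    using False by simp
  then show ?thesis
    using a c d by (subst mat2_eq_mk2, subst (2) mat2_eq_mk2) simp
qed

lemma Yset_eq_if_bottom_rows_proportional:
  assumes vr: "valid_reps C Rep" and y: "y \<in> Yset C Rep" and y': "y' \<in> Yset C Rep"
    and rows: "y$2$1 * y'$2$2 = y'$2$1 * y$2$2"
  shows "y = y'"
proof -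
  have S: "y \<in> SL2" "y' \<in> SL2"
    using y y' by (simp_all add: Yset_SL2)
  obtain s where s: "s \<in> ZO" "y'$2$1 = s * y$2$1" "y'$2$2 = s * y$2$2"
    using ZO_coprime_proportional[OF SL2_bottom_row_coprime[OF S(1)]] S(2) rows
    unfolding SL2_iff by blast
  obtain t where t: "t \<in> ZO" "y$2$1 = t * y'$2$1" "y$2$2 = t * y'$2$2"
    using ZO_coprime_proportional[OF SL2_bottom_row_coprime[OF S(2)]] S(1) rows
    unfolding SL2_iff by (metis mult.commute)
  have "(s * t - 1) * y$2$1 = 0" "(s * t - 1) * y$2$2 = 0"
    using s t by algebra+
  then have "s * t = 1"
    using SL2_bottom_row_nonzero[OF S(1)] by auto
  then have unit: "s \<in> ZO_units"
    using s(1) t(1) unfolding ZO_units_def by blast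
  show ?thesis
  proof (cases "y$2$1 = 0")
    case True
    then show ?thesis
      using s(2) Yset_eq_mat1_iff[OF vr y] Yset_eq_mat1_iff[OF vr y'] by simp
  next
    case False
    moreover have "s \<noteq> 0"
      using \<open>s * t = 1\<close> by auto
    ultimately have "y \<noteq> mat 1" "y' \<noteq> mat 1"
      using s(2) Yset_eq_mat1_iff[OF vr y] Yset_eq_mat1_iff[OF vr y'] by auto
    then have "y'$2$1 = y$2$1"
      using valid_reps_C_unique[OF vr _ _ unit s(2)] Yset_bottom_row_in_reps y y' by blast
    then have "s = 1"
      using s(2) False by simp
    then show ?thesis
      using Yset_eq_if_bottom_rows_eq[OF vr y y'] s(2,3) by simp
  qed
qed

lemma Yset_scaled_bottom_row_unique:
  assumes vr: "valid_reps C Rep" and y: "y \<in> Yset C Rep" and y': "y' \<in> Yset C Rep"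
    and i: "i \<noteq> 0" "i' \<noteq> 0"
    and c: "y$2$1 * i = y'$2$1 * i'" and d: "y$2$2 * i = y'$2$2 * i'"
  shows "y = y' \<and> i = i'"
proof -
  have "(y$2$1 * y'$2$2 - y'$2$1 * y$2$2) * i' = 0"
    using c d by algebra
  then have "y = y'"
    using Yset_eq_if_bottom_rows_proportional[OF vr y y'] i(2) by simp
  moreover have "y$2$1 \<noteq> 0 \<or> y$2$2 \<noteq> 0"
    using SL2_bottom_row_nonzero Yset_SL2 y by blast
  ultimately show ?thesis
    using c d by auto
qed


section \<open>The cells and their invariants\<close>

lemma SL3_Delta_partition:
  "SL3 = Delta2 \<union> Delta10 \<union> Delta11"
  "Delta2 \<inter> Delta10 = {}" "Delta2 \<inter> Delta11 = {}" "Delta10 \<inter> Delta11 = {}"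
  unfolding Delta2_def Delta10_def Delta11_def by auto

lemma Delta10_iff: "X \<in> Delta10 \<longleftrightarrow> X \<in> SL3 \<and> X \<notin> Delta2 \<and> X \<notin> Delta11"
  unfolding Delta2_def Delta10_def Delta11_def by auto

definition minor12 :: "mat3 \<Rightarrow> 3 \<Rightarrow> 3 \<Rightarrow> complex" where
  "minor12 A r s = A$r$1 * A$s$2 - A$s$1 * A$r$2"

lemma unipotent_right_mult_invariants:
  fixes M :: mat3
  shows "(M ** mk3 1 p q 0 1 r 0 0 1)$k$1 = M$k$1"
    and "minor12 (M ** mk3 1 p q 0 1 r 0 0 1) a b = minor12 M a b"
  by (simp_all add: minor12_def matrix_matrix_mult_def sum_3 algebra_simps)

definition phi_word :: "mat2 \<Rightarrow> mat2 \<Rightarrow> mat2 \<Rightarrow> mat3" where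
  "phi_word y1 y2 y3 = phi2 (matrix_inv y1) ** phi1 (matrix_inv y2) ** phi2 (matrix_inv y3)"

lemma phi_word_SL3:
  assumes "y1 \<in> SL2" "y2 \<in> SL2" "y3 \<in> SL2"
  shows "phi_word y1 y2 y3 \<in> SL3"
  unfolding phi_word_def using assms by (intro SL3_mult phi_SL3 SL2_matrix_inv)

lemma phi_word_mult_diag:
  assumes "det y1 = 1" "det y2 = 1" "det y3 = 1"
  shows "phi_word y1 y2 y3 ** mk3 i 0 0 0 j 0 0 0 k =
    mk3 (y2$2$2 * i) (- (y2$1$2 * y3$2$2 * j)) (y2$1$2 * y3$1$2 * k)
      (- (y1$2$2 * y2$2$1 * i)) ((y1$2$2 * y2$1$1 * y3$2$2 + y1$1$2 * y3$2$1) * j)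
      ((- (y1$2$2 * y2$1$1 * y3$1$2) - y1$1$2 * y3$1$1) * k)
      (y1$2$1 * y2$2$1 * i) ((- (y1$2$1 * y2$1$1 * y3$2$2) - y1$1$1 * y3$2$1) * j)
      ((y1$2$1 * y2$1$1 * y3$1$2 + y1$1$1 * y3$1$1) * k)"
  using assms by (simp add: phi_word_def matrix_inv_mat2 phi1_def phi2_def mk3_mult)

lemma coset_invariants:
  assumes det: "det y1 = 1" "det y2 = 1" "det y3 = 1" and u: "u \<in> U3"
    and X: "X \<in> coset3 (phi_word y1 y2 y3 ** mk3 i 0 0 0 j 0 0 0 k ** u)"
  shows "X$1$1 = y2$2$2 * i" "X$2$1 = - (y1$2$2 * y2$2$1 * i)" "X$3$1 = y1$2$1 * y2$2$1 * i"
    and "minor12 X 2 3 = i * j * y2$2$1 * y3$2$1"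
    and "minor12 X 1 2 = i * j * (y1$2$2 * y3$2$2 + y1$1$2 * y3$2$1 * y2$2$2)"
    and "minor12 X 1 3 = - (i * j * (y1$2$1 * y3$2$2 + y1$1$1 * y3$2$1 * y2$2$2))"
proof -
  define P where "P = phi_word y1 y2 y3 ** mk3 i 0 0 0 j 0 0 0 k"
  obtain \<alpha> \<beta> \<gamma> where u_eq: "u = mk3 1 \<alpha> \<beta> 0 1 \<gamma> 0 0 1"
    using u by (auto elim: U3E)
  obtain h where h: "h \<in> Gamma_inf3" "X = P ** u ** h"
    using X unfolding coset3_def P_def by blast
  obtain x y z where h_eq: "h = mk3 1 (3 * x) (3 * z) 0 1 (3 * y) 0 0 1"
    using h(1) by (auto elim: Gamma_inf3E)
  have col: "X$r$1 = P$r$1" and minor: "minor12 X r s = minor12 P r s" for r s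
    unfolding h(2) u_eq h_eq unipotent_right_mult_invariants by (rule refl)+
  have d: "y1$1$1 * y1$2$2 - y1$1$2 * y1$2$1 = 1" "y2$1$1 * y2$2$2 - y2$1$2 * y2$2$1 = 1"
    using det(1,2) by (simp_all add: det_2)
  note P_eq = P_def phi_word_mult_diag[OF det]
  show "X$1$1 = y2$2$2 * i" "X$2$1 = - (y1$2$2 * y2$2$1 * i)" "X$3$1 = y1$2$1 * y2$2$1 * i"
    unfolding col P_eq by simp_all
  show "minor12 X 2 3 = i * j * y2$2$1 * y3$2$1"
    unfolding minor unfolding P_eq minor12_def mk3_nth using d(1) by algebra
  show "minor12 X 1 2 = i * j * (y1$2$2 * y3$2$2 + y1$1$2 * y3$2$1 * y2$2$2)"
    unfolding minor unfolding P_eq minor12_def mk3_nth using d(2) by algebra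
  show "minor12 X 1 3 = - (i * j * (y1$2$1 * y3$2$2 + y1$1$1 * y3$2$1 * y2$2$2))"
    unfolding minor unfolding P_eq minor12_def mk3_nth using d(2) by algebra
qed

definition cell :: "mat2 \<times> mat2 \<times> mat2 \<times> mat3 \<times> mat3 \<Rightarrow> mat3 set" where
  "cell = (\<lambda>(y1, y2, y3, d, u). coset3 (phi_word y1 y2 y3 ** d ** u))"

text \<open>The condition on \<open>y1\<close> makes the cells with \<open>y2 = I\<close>, with \<open>y2 \<noteq> I = y3\<close> and with
  \<open>y2, y3 \<noteq> I\<close> exactly those of \<open>\<Delta>\<^sub>2\<close>, \<open>\<Delta>\<^sub>1\<^sub>,\<^sub>0\<close> and \<open>\<Delta>\<^sub>1\<^sub>,\<^sub>1\<close>.\<close>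

definition cell_params ::
    "complex set \<Rightarrow> (complex \<Rightarrow> complex set) \<Rightarrow> (mat2 \<times> mat2 \<times> mat2 \<times> mat3 \<times> mat3) set" where
  "cell_params C Rep = {(y1, y2, y3, d, u). y1 \<in> Yset C Rep \<and> y2 \<in> Yset C Rep \<and> y3 \<in> Yset C Rep \<and>
     (y2 = mat 1 \<longrightarrow> y1 = mat 1) \<and> d \<in> D3 \<and> u \<in> U3}"

lemma cell_Delta_iff:
  assumes vr: "valid_reps C Rep" and p: "(y1, y2, y3, d, u) \<in> cell_params C Rep"
    and X: "X \<in> cell (y1, y2, y3, d, u)"
  shows "X \<in> SL3"
    and "X \<in> Delta2 \<longleftrightarrow> y2 = mat 1"
    and "X \<in> Delta11 \<longleftrightarrow> y2 \<noteq> mat 1 \<and> y3 \<noteq> mat 1"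
    and "X \<in> Delta10 \<longleftrightarrow> y2 \<noteq> mat 1 \<and> y3 = mat 1"
proof -
  have Y: "y1 \<in> Yset C Rep" "y2 \<in> Yset C Rep" "y3 \<in> Yset C Rep" and du: "d \<in> D3" "u \<in> U3"
    using p unfolding cell_params_def by auto
  have S: "y1 \<in> SL2" "y2 \<in> SL2" "y3 \<in> SL2"
    using Y by (simp_all add: Yset_SL2)
  have X': "X \<in> coset3 (phi_word y1 y2 y3 ** d ** u)"
    using X unfolding cell_def by simp
  show XS: "X \<in> SL3"
    using X' phi_word_SL3[OF S] D3_SL3[OF du(1)] U3_SL3[OF du(2)] Gamma_inf3_SL3 SL3_mult
    unfolding coset3_def by blast
  obtain i j k where ijk: "i * j * k = 1" "d = mk3 i 0 0 0 j 0 0 0 k"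
    using du(1) by (auto elim: D3E)
  note inv = coset_invariants[OF SL2_det[OF S(1)] SL2_det[OF S(2)] SL2_det[OF S(3)] du(2)
      X'[unfolded ijk(2)]]
  have "i \<noteq> 0" "j \<noteq> 0"
    using ijk(1) by auto
  moreover have "y1$2$1 \<noteq> 0 \<or> y1$2$2 \<noteq> 0"
    using SL2_bottom_row_nonzero[OF S(1)] .
  ultimately show D2: "X \<in> Delta2 \<longleftrightarrow> y2 = mat 1"
    unfolding Delta2_def Yset_eq_mat1_iff[OF vr Y(2)] using XS inv(2,3) by auto
  have "X$2$1 * X$3$2 - X$2$2 * X$3$1 = minor12 X 2 3"
    unfolding minor12_def by (simp add: algebra_simps)
  then show D11: "X \<in> Delta11 \<longleftrightarrow> y2 \<noteq> mat 1 \<and> y3 \<noteq> mat 1"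
    unfolding Delta11_def Yset_eq_mat1_iff[OF vr Y(2)] Yset_eq_mat1_iff[OF vr Y(3)]
    using XS inv(4) \<open>i \<noteq> 0\<close> \<open>j \<noteq> 0\<close> by auto
  show "X \<in> Delta10 \<longleftrightarrow> y2 \<noteq> mat 1 \<and> y3 = mat 1"
    unfolding Delta10_iff using XS D2 D11 by blast
qed


section \<open>Every matrix lies in a cell\<close>

lemma SL3_upper_triangular_decomposition:
  assumes T: "T \<in> SL3" "T$2$1 = 0" "T$3$1 = 0" "T$3$2 = 0"
  obtains d u h where "d \<in> D3" "u \<in> U3" "h \<in> Gamma_inf3" "T = d ** u ** h"
proof -
  have Z: "T$1$1 \<in> ZO" "T$1$2 \<in> ZO" "T$1$3 \<in> ZO" "T$2$2 \<in> ZO" "T$2$3 \<in> ZO" "T$3$3 \<in> ZO"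
    using T(1) by (simp_all add: SL3_entry)
  have diag: "T$1$1 * T$2$2 * T$3$3 = 1"
    using T unfolding SL3_def by (simp add: det_3)
  \<comment> \<open>the off-diagonal entries of \<open>d\<inverse> T\<close>, to be reduced modulo 3 into \<open>R3\<close>\<close>
  define n12 where "n12 = T$1$2 * (T$2$2 * T$3$3)"
  define n13 where "n13 = T$1$3 * (T$2$2 * T$3$3)"
  define n23 where "n23 = T$2$3 * (T$1$1 * T$3$3)"
  have nZ: "n12 \<in> ZO" "n13 \<in> ZO" "n23 \<in> ZO"
    unfolding n12_def n13_def n23_def using Z by auto
  obtain \<alpha> w1 where a: "\<alpha> \<in> R3" "w1 \<in> ZO" "n12 - \<alpha> = 3 * w1"
    using R3_residue_exists[OF nZ(1)] .
  obtain \<gamma> w2 where g: "\<gamma> \<in> R3" "w2 \<in> ZO" "n23 - \<gamma> = 3 * w2"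
    using R3_residue_exists[OF nZ(3)] .
  have "n13 - \<alpha> * (3 * w2) \<in> ZO"
    using nZ a g R3_subset_ZO by auto
  then obtain \<beta> w3 where b: "\<beta> \<in> R3" "w3 \<in> ZO" "n13 - \<alpha> * (3 * w2) - \<beta> = 3 * w3"
    by (rule R3_residue_exists)
  define d where "d = mk3 (T$1$1) 0 0 0 (T$2$2) 0 0 0 (T$3$3)"
  define u where "u = mk3 1 \<alpha> \<beta> 0 1 \<gamma> 0 0 1"
  define h where "h = mk3 1 (3 * w1) (3 * w3) 0 1 (3 * w2) 0 0 1"
  have "d \<in> D3"
    unfolding d_def D3_def using Z diag by blast
  moreover have "u \<in> U3"
    unfolding u_def U3_def using a g b by blast
  moreover have "h \<in> Gamma_inf3"
    unfolding h_def using a g b by (intro Gamma_inf3I)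
  moreover have "T = d ** u ** h"
  proof -
    have "d ** u ** h = mk3 (T$1$1) (T$1$1 * n12) (T$1$1 * n13) 0 (T$2$2) (T$2$2 * n23) 0 0 (T$3$3)"
      unfolding d_def u_def h_def using a(3) g(3) b(3)
      by (simp add: mk3_mult mk3_eq_iff algebra_simps)
    also have "\<dots> = T"
    proof -
      have "T$1$1 * n12 = (T$1$1 * T$2$2 * T$3$3) * T$1$2"
        "T$1$1 * n13 = (T$1$1 * T$2$2 * T$3$3) * T$1$3"
        "T$2$2 * n23 = (T$1$1 * T$2$2 * T$3$3) * T$2$3"
        unfolding n12_def n13_def n23_def by (simp_all add: algebra_simps)
      then show ?thesis
        using diag T(2-4) by (subst (5) mat3_eq_mk3) simp
    qed
    finally show ?thesis ..
  qed
  ultimately show ?thesis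
    using that by blast
qed

lemma SL3_triangularization:
  assumes vr: "valid_reps C Rep" and X: "X \<in> SL3"
  obtains y1 y2 y3 where "y1 \<in> Yset C Rep" "y2 \<in> Yset C Rep" "y3 \<in> Yset C Rep"
    "y2 = mat 1 \<longrightarrow> y1 = mat 1"
    "(phi2 y3 ** (phi1 y2 ** (phi2 y1 ** X)))$2$1 = 0"
    "(phi2 y3 ** (phi1 y2 ** (phi2 y1 ** X)))$3$1 = 0"
    "(phi2 y3 ** (phi1 y2 ** (phi2 y1 ** X)))$3$2 = 0"
proof -
  obtain y1 where y1: "y1 \<in> Yset C Rep" "y1$2$1 * X$2$1 + y1$2$2 * X$3$1 = 0"
    "y1 = mat 1 \<longleftrightarrow> X$3$1 = 0"
    using Yset_annihilator[OF vr SL3_entry[OF X] SL3_entry[OF X]] .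
  define X1 where "X1 = phi2 y1 ** X"
  have X1: "X1 \<in> SL3"
    unfolding X1_def using phi_SL3 Yset_SL2 y1(1) X SL3_mult by blast
  obtain y2 where y2: "y2 \<in> Yset C Rep" "y2$2$1 * X1$1$1 + y2$2$2 * X1$2$1 = 0"
    "y2 = mat 1 \<longleftrightarrow> X1$2$1 = 0"
    using Yset_annihilator[OF vr SL3_entry[OF X1] SL3_entry[OF X1]] .
  define X2 where "X2 = phi1 y2 ** X1"
  have X2: "X2 \<in> SL3"
    unfolding X2_def using phi_SL3 Yset_SL2 y2(1) X1 SL3_mult by blast
  obtain y3 where y3: "y3 \<in> Yset C Rep" "y3$2$1 * X2$2$2 + y3$2$2 * X2$3$2 = 0"
    using Yset_annihilator[OF vr SL3_entry[OF X2] SL3_entry[OF X2]] by blast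
  have X1_31: "X1$3$1 = 0"
    unfolding X1_def phi2_mult_entries using y1(2) .
  have X2_21: "X2$2$1 = 0" and X2_31: "X2$3$1 = 0"
    unfolding X2_def phi1_mult_entries using y2(2) X1_31 by simp_all
  have y21: "y2 = mat 1 \<longrightarrow> y1 = mat 1"
  proof
    assume "y2 = mat 1"
    then have "y1$1$1 * X$2$1 + y1$1$2 * X$3$1 = 0"
      using y2(3) unfolding X1_def phi2_mult_entries by simp
    moreover have "y1$1$1 * y1$2$2 - y1$1$2 * y1$2$1 = 1"
      using Yset_SL2[OF y1(1)] unfolding SL2_iff by simp
    ultimately have "X$3$1 = 0"
      using y1(2) by algebra
    then show "y1 = mat 1"
      using y1(3) by simp
  qed
  have "(phi2 y3 ** X2)$2$1 = 0" "(phi2 y3 ** X2)$3$1 = 0" "(phi2 y3 ** X2)$3$2 = 0"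
    unfolding phi2_mult_entries using X2_21 X2_31 y3(2) by simp_all
  then show ?thesis
    using that[OF y1(1) y2(1) y3(1) y21] unfolding X2_def X1_def by blast
qed

lemma SL3_in_some_cell:
  assumes vr: "valid_reps C Rep" and X: "X \<in> SL3"
  obtains p where "p \<in> cell_params C Rep" "X \<in> cell p"
proof -
  obtain y1 y2 y3 where Y: "y1 \<in> Yset C Rep" "y2 \<in> Yset C Rep" "y3 \<in> Yset C Rep"
    and y21: "y2 = mat 1 \<longrightarrow> y1 = mat 1"
    and T0: "(phi2 y3 ** (phi1 y2 ** (phi2 y1 ** X)))$2$1 = 0"
      "(phi2 y3 ** (phi1 y2 ** (phi2 y1 ** X)))$3$1 = 0"
      "(phi2 y3 ** (phi1 y2 ** (phi2 y1 ** X)))$3$2 = 0"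
    by (rule SL3_triangularization[OF vr X])
  have S: "y1 \<in> SL2" "y2 \<in> SL2" "y3 \<in> SL2"
    using Y by (simp_all add: Yset_SL2)
  define T where "T = phi2 y3 ** (phi1 y2 ** (phi2 y1 ** X))"
  have "T \<in> SL3"
    unfolding T_def using phi_SL3 S X by (intro SL3_mult) auto
  then obtain d u h where duh: "d \<in> D3" "u \<in> U3" "h \<in> Gamma_inf3" "T = d ** u ** h"
    by (rule SL3_upper_triangular_decomposition) (use T0 in \<open>simp_all add: T_def\<close>)
  have cancel: "M ** A ** B = M" if "A ** B = mat 1" for M A B :: mat3
    by (metis matrix_mul_assoc matrix_mul_rid that)
  have "X = phi_word y1 y2 y3 ** T"
    unfolding T_def phi_word_def
    by (simp add: matrix_mul_assoc cancel phi_matrix_inv_cancel SL2_det S)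
  then have "X \<in> cell (y1, y2, y3, d, u)"
    unfolding cell_def coset3_def using duh(3,4) by (auto simp: matrix_mul_assoc)
  moreover have "(y1, y2, y3, d, u) \<in> cell_params C Rep"
    unfolding cell_params_def using Y y21 duh(1,2) by simp
  ultimately show ?thesis
    using that by blast
qed


section \<open>The cells are disjoint\<close>

lemma Yset_first_column_unique:
  assumes vr: "valid_reps C Rep"
    and Y: "y1 \<in> Yset C Rep" "y2 \<in> Yset C Rep" "y1' \<in> Yset C Rep" "y2' \<in> Yset C Rep"
    and norm: "y2 = mat 1 \<longrightarrow> y1 = mat 1" "y2' = mat 1 \<longrightarrow> y1' = mat 1"
    and i: "i \<noteq> 0" "i' \<noteq> 0"
    and e1: "y2$2$2 * i = y2'$2$2 * i'"
    and e2: "y1$2$2 * y2$2$1 * i = y1'$2$2 * y2'$2$1 * i'"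
    and e3: "y1$2$1 * y2$2$1 * i = y1'$2$1 * y2'$2$1 * i'"
  shows "y1 = y1' \<and> y2 = y2' \<and> i = i'"
proof (cases "y2$2$1 = 0")
  case True
  have "y1'$2$1 \<noteq> 0 \<or> y1'$2$2 \<noteq> 0"
    using SL2_bottom_row_nonzero Yset_SL2 Y(3) by blast
  then have "y2'$2$1 = 0"
    using e2 e3 True i(2) by auto
  then have "y2 = mat 1" "y2' = mat 1"
    using True Yset_eq_mat1_iff[OF vr Y(2)] Yset_eq_mat1_iff[OF vr Y(4)] by simp_all
  moreover from this have "i = i'"
    using e1 by (simp add: mat1_eq_mk2)
  ultimately show ?thesis
    using norm by simp
next
  case False
  have "(y2$2$1 * i) * (y1$2$1 * y1'$2$2 - y1'$2$1 * y1$2$2) = 0"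
    using e2 e3 by algebra
  then have "y1$2$1 * y1'$2$2 = y1'$2$1 * y1$2$2"
    using False i(1) by simp
  then have y1: "y1 = y1'"
    using Yset_eq_if_bottom_rows_proportional[OF vr Y(1,3)] by blast
  have "y1$2$2 * (y2$2$1 * i - y2'$2$1 * i') = 0" "y1$2$1 * (y2$2$1 * i - y2'$2$1 * i') = 0"
    using e2 e3 unfolding y1 by (simp_all add: algebra_simps)
  moreover have "y1$2$1 \<noteq> 0 \<or> y1$2$2 \<noteq> 0"
    using SL2_bottom_row_nonzero Yset_SL2 Y(1) by blast
  ultimately have "y2$2$1 * i = y2'$2$1 * i'"
    by auto
  then show ?thesis
    using Yset_scaled_bottom_row_unique[OF vr Y(2,4) i _ e1] y1 by blast
qed

lemma Yset_minors_unique: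
  fixes y1 y2 :: mat2
  assumes vr: "valid_reps C Rep" and Y: "y3 \<in> Yset C Rep" "y3' \<in> Yset C Rep"
    and det: "det y1 = 1" "det y2 = 1" and nz: "i \<noteq> 0" "j \<noteq> 0" "j' \<noteq> 0"
    and e4: "i * j * y2$2$1 * y3$2$1 = i * j' * y2$2$1 * y3'$2$1"
    and e5: "i * j * (y1$2$2 * y3$2$2 + y1$1$2 * y3$2$1 * y2$2$2)
      = i * j' * (y1$2$2 * y3'$2$2 + y1$1$2 * y3'$2$1 * y2$2$2)"
    and e6: "i * j * (y1$2$1 * y3$2$2 + y1$1$1 * y3$2$1 * y2$2$2)
      = i * j' * (y1$2$1 * y3'$2$2 + y1$1$1 * y3'$2$1 * y2$2$2)"
  shows "y3 = y3' \<and> j = j'"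
proof -
  define U where "U = j * y3$2$1 - j' * y3'$2$1"
  define V where "V = j * y3$2$2 - j' * y3'$2$2"
  have d: "y1$1$1 * y1$2$2 - y1$1$2 * y1$2$1 = 1" "y2$1$1 * y2$2$2 - y2$1$2 * y2$2$1 = 1"
    using det by (simp_all add: det_2)
  have "i * (y1$2$2 * V + y1$1$2 * (y2$2$2 * U)) = 0" "i * (y1$2$1 * V + y1$1$1 * (y2$2$2 * U)) = 0"
    "i * (y2$2$1 * U) = 0"
    using e4 e5 e6 unfolding U_def V_def by algebra+
  then have "y1$2$2 * V + y1$1$2 * (y2$2$2 * U) = 0" "y1$2$1 * V + y1$1$1 * (y2$2$2 * U) = 0"
    "y2$2$1 * U = 0"
    using nz(1) by simp_all
  \<comment> \<open>a linear system with matrix \<open>y1\<close>, then one with the bottom row of \<open>y2\<close>\<close>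
  then have "V = 0" "y2$2$2 * U = 0"
    using d(1) by algebra+
  then have "U = 0"
    using \<open>y2$2$1 * U = 0\<close> d(2) by algebra
  then show ?thesis
    using Yset_scaled_bottom_row_unique[OF vr Y nz(2,3)] \<open>V = 0\<close>
    unfolding U_def V_def by (simp add: algebra_simps)
qed

lemma U3_Gamma_inf3_unique:
  assumes R: "u \<in> U3" "u' \<in> U3" and h: "h \<in> Gamma_inf3" "h' \<in> Gamma_inf3"
    and eq: "u ** h = u' ** h'"
  shows "u = u'"
proof -
  obtain \<alpha> \<beta> \<gamma> \<alpha>' \<beta>' \<gamma>'
    where R3: "\<alpha> \<in> R3" "\<beta> \<in> R3" "\<gamma> \<in> R3" "\<alpha>' \<in> R3" "\<beta>' \<in> R3" "\<gamma>' \<in> R3"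
    and u: "u = mk3 1 \<alpha> \<beta> 0 1 \<gamma> 0 0 1" "u' = mk3 1 \<alpha>' \<beta>' 0 1 \<gamma>' 0 0 1"
    using R by (auto elim!: U3E)
  obtain x y z x' y' z' where Z: "x \<in> ZO" "y \<in> ZO" "z \<in> ZO" "x' \<in> ZO" "y' \<in> ZO" "z' \<in> ZO"
    and hh: "h = mk3 1 (3 * x) (3 * z) 0 1 (3 * y) 0 0 1"
      "h' = mk3 1 (3 * x') (3 * z') 0 1 (3 * y') 0 0 1"
    using h by (auto elim!: Gamma_inf3E)
  have "3 * x + \<alpha> = 3 * x' + \<alpha>'" "3 * y + \<gamma> = 3 * y' + \<gamma>'"
    "3 * z + \<alpha> * (3 * y) + \<beta> = 3 * z' + \<alpha>' * (3 * y') + \<beta>'"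
    using eq unfolding u hh by (simp_all add: mk3_mult mk3_eq_iff)
  then have "\<alpha> - \<alpha>' = 3 * (x' - x)" "\<gamma> - \<gamma>' = 3 * (y' - y)"
    "\<beta> - \<beta>' = 3 * (z' - z + \<alpha>' * y' - \<alpha> * y)"
    by (simp_all add: algebra_simps)
  moreover have "x' - x \<in> ZO" "y' - y \<in> ZO" "z' - z + \<alpha>' * y' - \<alpha> * y \<in> ZO"
    using Z R3 R3_subset_ZO by auto
  ultimately have "\<alpha> = \<alpha>'" "\<gamma> = \<gamma>'" "\<beta> = \<beta>'"
    using R3_residue_unique R3 by blast+
  then show ?thesis
    unfolding u by simp
qed

lemma coset3_U3_unique:
  assumes "P \<in> SL3" "u \<in> U3" "u' \<in> U3" "X \<in> coset3 (P ** u)" "X \<in> coset3 (P ** u')"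
  shows "u = u'"
proof -
  obtain h h' where h: "h \<in> Gamma_inf3" "h' \<in> Gamma_inf3" and "P ** u ** h = P ** u' ** h'"
    using assms(4,5) unfolding coset3_def by blast
  then have "P ** (u ** h) = P ** (u' ** h')"
    by (simp add: matrix_mul_assoc)
  then have "u ** h = u' ** h'"
    by (rule SL3_mult_left_cancel[OF assms(1)])
  then show ?thesis
    using U3_Gamma_inf3_unique[OF assms(2,3) h] by simp
qed

lemma cell_unique:
  assumes vr: "valid_reps C Rep" and p: "p \<in> cell_params C Rep" "p' \<in> cell_params C Rep"
    and X: "X \<in> cell p" "X \<in> cell p'"
  shows "p = p'"
proof -
  obtain y1 y2 y3 d u y1' y2' y3' d' u'
    where pp: "p = (y1, y2, y3, d, u)" "p' = (y1', y2', y3', d', u')"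
    by (cases p, cases p') auto
  have Y: "y1 \<in> Yset C Rep" "y2 \<in> Yset C Rep" "y3 \<in> Yset C Rep"
      "y1' \<in> Yset C Rep" "y2' \<in> Yset C Rep" "y3' \<in> Yset C Rep"
    and norm: "y2 = mat 1 \<longrightarrow> y1 = mat 1" "y2' = mat 1 \<longrightarrow> y1' = mat 1"
    and du: "d \<in> D3" "u \<in> U3" "d' \<in> D3" "u' \<in> U3"
    using p unfolding pp cell_params_def by auto
  have S: "y1 \<in> SL2" "y2 \<in> SL2" "y3 \<in> SL2" "y1' \<in> SL2" "y2' \<in> SL2" "y3' \<in> SL2"
    using Y by (simp_all add: Yset_SL2)
  have X': "X \<in> coset3 (phi_word y1 y2 y3 ** d ** u)"
    "X \<in> coset3 (phi_word y1' y2' y3' ** d' ** u')"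
    using X unfolding pp cell_def by simp_all
  obtain i j k where ijk: "i * j * k = 1" "d = mk3 i 0 0 0 j 0 0 0 k"
    using du(1) by (auto elim: D3E)
  obtain i' j' k' where ijk': "i' * j' * k' = 1" "d' = mk3 i' 0 0 0 j' 0 0 0 k'"
    using du(3) by (auto elim: D3E)
  have nz: "i \<noteq> 0" "j \<noteq> 0" "i' \<noteq> 0" "j' \<noteq> 0"
    using ijk(1) ijk'(1) by auto
  note inv = coset_invariants[OF SL2_det[OF S(1)] SL2_det[OF S(2)] SL2_det[OF S(3)] du(2)
      X'(1)[unfolded ijk(2)]]
  note inv' = coset_invariants[OF SL2_det[OF S(4)] SL2_det[OF S(5)] SL2_det[OF S(6)] du(4)
      X'(2)[unfolded ijk'(2)]]
  have y12: "y1' = y1" "y2' = y2" "i' = i"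
    using Yset_first_column_unique[OF vr Y(1,2,4,5) norm nz(1,3)] inv(1-3) inv'(1-3) by auto
  have y3: "y3' = y3" "j' = j"
    using Yset_minors_unique[OF vr Y(3,6) SL2_det[OF S(1)] SL2_det[OF S(2)] nz(1,2,4)]
      inv(4-6) inv'(4-6) unfolding y12 by auto
  have "(i * j) * k' = (i * j) * k"
    using ijk(1) ijk'(1) unfolding y12 y3 by simp
  then have "k' = k"
    using nz(1,2) by simp
  then have d: "d' = d"
    unfolding ijk(2) ijk'(2) y12 y3 by simp
  have "u' = u"
    using coset3_U3_unique[OF SL3_mult[OF phi_word_SL3[OF S(1-3)] D3_SL3[OF du(1)]] du(4,2)] X'
    unfolding y12 y3 d by blast
  then show ?thesis
    unfolding pp y12 y3 d by simp
qed

lemma disjoint_family_on_cells: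
  assumes "valid_reps C Rep"
  shows "disjoint_family_on cell (cell_params C Rep)"
  unfolding disjoint_family_on_def using cell_unique[OF assms] by blast

section \<open>The decomposition of \<open>\<Delta>\<^sub>2\<close>, \<open>\<Delta>\<^sub>1\<^sub>,\<^sub>0\<close> and \<open>\<Delta>\<^sub>1\<^sub>,\<^sub>1\<close>\<close>

lemma Union_disjoint_family_reindex:
  assumes cover: "D \<subseteq> \<Union>(F ` P)"
    and sel: "\<And>p X. p \<in> P \<Longrightarrow> X \<in> F p \<Longrightarrow> X \<in> D \<longleftrightarrow> Q p"
    and g: "bij_betw g A {p \<in> P. Q p}" and G: "\<And>a. a \<in> A \<Longrightarrow> G a = F (g a)"
    and disj: "disjoint_family_on F P"
  shows "D = \<Union>(G ` A) \<and> disjoint_family_on G A"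
proof
  have "D = \<Union>(F ` {p \<in> P. Q p})"
    using cover sel by blast
  also have "\<dots> = \<Union>(F ` g ` A)"
    using g by (simp add: bij_betw_def)
  also have "\<dots> = \<Union>(G ` A)"
    using G by (simp add: image_image)
  finally show "D = \<Union>(G ` A)" .
  show "disjoint_family_on G A"
    unfolding disjoint_family_on_def
  proof (intro ballI impI)
    fix a b
    assume ab: "a \<in> A" "b \<in> A" "a \<noteq> b"
    then have "g a \<noteq> g b" "g a \<in> P" "g b \<in> P"
      using g unfolding bij_betw_def inj_on_def by auto
    then show "G a \<inter> G b = {}"
      using disj G ab(1,2) unfolding disjoint_family_on_def by auto
  qed
qed

lemma SL3_subset_cells: "valid_reps C Rep \<Longrightarrow> SL3 \<subseteq> \<Union>(cell ` cell_params C Rep)"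
  using SL3_in_some_cell by blast

lemma Delta2_cells:
  assumes vr: "valid_reps C Rep"
  shows "Delta2 = (\<Union>(y, d, u) \<in> Yset C Rep \<times> D3 \<times> U3. coset3 (phi2 (matrix_inv y) ** d ** u))
    \<and> disjoint_family_on (\<lambda>(y, d, u). coset3 (phi2 (matrix_inv y) ** d ** u))
        (Yset C Rep \<times> D3 \<times> U3)"
proof (rule Union_disjoint_family_reindex)
  show "Delta2 \<subseteq> \<Union>(cell ` cell_params C Rep)"
    using SL3_subset_cells[OF vr] SL3_Delta_partition(1) by blast
  show "X \<in> Delta2 \<longleftrightarrow> (\<lambda>(y1, y2, y3, d, u). y2 = mat 1) p"
    if "p \<in> cell_params C Rep" "X \<in> cell p" for p X
    using that cell_Delta_iff(2)[OF vr] by (cases p) auto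
  show "bij_betw (\<lambda>(y, d, u). (mat 1, mat 1, y, d, u)) (Yset C Rep \<times> D3 \<times> U3)
      {p \<in> cell_params C Rep. (\<lambda>(y1, y2, y3, d, u). y2 = mat 1) p}"
    unfolding bij_betw_def inj_on_def cell_params_def by force
  show "(\<lambda>(y, d, u). coset3 (phi2 (matrix_inv y) ** d ** u)) a
      = cell ((\<lambda>(y, d, u). (mat 1, mat 1, y, d, u)) a)"
    for a
    by (cases a) (simp add: cell_def phi_word_def matrix_inv_mat1)
qed (rule disjoint_family_on_cells[OF vr])

lemma Delta10_cells:
  assumes vr: "valid_reps C Rep"
  shows "Delta10 = (\<Union>(y1, y2, d, u) \<in> Yset C Rep \<times> (Yset C Rep - {mat 1}) \<times> D3 \<times> U3.
                  coset3 (phi2 (matrix_inv y1) ** phi1 (matrix_inv y2) ** d ** u))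
    \<and> disjoint_family_on
        (\<lambda>(y1, y2, d, u). coset3 (phi2 (matrix_inv y1) ** phi1 (matrix_inv y2) ** d ** u))
        (Yset C Rep \<times> (Yset C Rep - {mat 1}) \<times> D3 \<times> U3)"
proof (rule Union_disjoint_family_reindex)
  show "Delta10 \<subseteq> \<Union>(cell ` cell_params C Rep)"
    using SL3_subset_cells[OF vr] SL3_Delta_partition(1) by blast
  show "X \<in> Delta10 \<longleftrightarrow> (\<lambda>(y1, y2, y3, d, u). y2 \<noteq> mat 1 \<and> y3 = mat 1) p"
    if "p \<in> cell_params C Rep" "X \<in> cell p" for p X
    using that cell_Delta_iff(4)[OF vr] by (cases p) auto
  show "bij_betw (\<lambda>(y1, y2, d, u). (y1, y2, mat 1, d, u))
      (Yset C Rep \<times> (Yset C Rep - {mat 1}) \<times> D3 \<times> U3)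
      {p \<in> cell_params C Rep. (\<lambda>(y1, y2, y3, d, u). y2 \<noteq> mat 1 \<and> y3 = mat 1) p}"
    unfolding bij_betw_def inj_on_def cell_params_def by force
  show "(\<lambda>(y1, y2, d, u). coset3 (phi2 (matrix_inv y1) ** phi1 (matrix_inv y2) ** d ** u)) a
      = cell ((\<lambda>(y1, y2, d, u). (y1, y2, mat 1, d, u)) a)" for a
    by (cases a) (simp add: cell_def phi_word_def matrix_inv_mat1)
qed (rule disjoint_family_on_cells[OF vr])

lemma Delta11_cells:
  assumes vr: "valid_reps C Rep"
  shows "Delta11 = (\<Union>(y1, y2, y3, d, u) \<in>
                  Yset C Rep \<times> (Yset C Rep - {mat 1}) \<times> (Yset C Rep - {mat 1}) \<times> D3 \<times> U3.
                  coset3 (phi2 (matrix_inv y1) ** phi1 (matrix_inv y2) ** phi2 (matrix_inv y3) ** d ** u))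
    \<and> disjoint_family_on
        (\<lambda>(y1, y2, y3, d, u).
           coset3 (phi2 (matrix_inv y1) ** phi1 (matrix_inv y2) ** phi2 (matrix_inv y3) ** d ** u))
        (Yset C Rep \<times> (Yset C Rep - {mat 1}) \<times> (Yset C Rep - {mat 1}) \<times> D3 \<times> U3)"
proof (rule Union_disjoint_family_reindex)
  show "Delta11 \<subseteq> \<Union>(cell ` cell_params C Rep)"
    using SL3_subset_cells[OF vr] SL3_Delta_partition(1) by blast
  show "X \<in> Delta11 \<longleftrightarrow> (\<lambda>(y1, y2, y3, d, u). y2 \<noteq> mat 1 \<and> y3 \<noteq> mat 1) p"
    if "p \<in> cell_params C Rep" "X \<in> cell p" for p X
    using that cell_Delta_iff(3)[OF vr] by (cases p) auto
  show "bij_betw (\<lambda>p. p)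
      (Yset C Rep \<times> (Yset C Rep - {mat 1}) \<times> (Yset C Rep - {mat 1}) \<times> D3 \<times> U3)
      {p \<in> cell_params C Rep. (\<lambda>(y1, y2, y3, d, u). y2 \<noteq> mat 1 \<and> y3 \<noteq> mat 1) p}"
    unfolding bij_betw_def cell_params_def by force
  show "(\<lambda>(y1, y2, y3, d, u).
      coset3 (phi2 (matrix_inv y1) ** phi1 (matrix_inv y2) ** phi2 (matrix_inv y3) ** d ** u)) a
      = cell a" for a
    by (cases a) (simp add: cell_def phi_word_def)
qed (rule disjoint_family_on_cells[OF vr])

theorem corollary2p17:
  fixes C :: "complex set" and Rep :: "complex \<Rightarrow> complex set"
  assumes "valid_reps C Rep"
  shows "SL3 = Delta2 \<union> Delta10 \<union> Delta11
    \<and> Delta2 \<inter> Delta10 = {} \<and> Delta2 \<inter> Delta11 = {} \<and> Delta10 \<inter> Delta11 = {}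
    \<and> Delta2 = (\<Union>(y, d, u) \<in> Yset C Rep \<times> D3 \<times> U3.
                  coset3 (phi2 (matrix_inv y) ** d ** u))
    \<and> disjoint_family_on (\<lambda>(y, d, u). coset3 (phi2 (matrix_inv y) ** d ** u))
                  (Yset C Rep \<times> D3 \<times> U3)
    \<and> Delta10 = (\<Union>(y1, y2, d, u) \<in> Yset C Rep \<times> (Yset C Rep - {mat 1}) \<times> D3 \<times> U3.
                  coset3 (phi2 (matrix_inv y1) ** phi1 (matrix_inv y2) ** d ** u))
    \<and> disjoint_family_on
        (\<lambda>(y1, y2, d, u). coset3 (phi2 (matrix_inv y1) ** phi1 (matrix_inv y2) ** d ** u))
        (Yset C Rep \<times> (Yset C Rep - {mat 1}) \<times> D3 \<times> U3)
    \<and> Delta11 = (\<Union>(y1, y2, y3, d, u) \<in>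
                  Yset C Rep \<times> (Yset C Rep - {mat 1}) \<times> (Yset C Rep - {mat 1}) \<times> D3 \<times> U3.
                  coset3 (phi2 (matrix_inv y1) ** phi1 (matrix_inv y2) ** phi2 (matrix_inv y3) ** d ** u))
    \<and> disjoint_family_on
        (\<lambda>(y1, y2, y3, d, u).
           coset3 (phi2 (matrix_inv y1) ** phi1 (matrix_inv y2) ** phi2 (matrix_inv y3) ** d ** u))
        (Yset C Rep \<times> (Yset C Rep - {mat 1}) \<times> (Yset C Rep - {mat 1}) \<times> D3 \<times> U3)"
  using SL3_Delta_partition Delta2_cells[OF assms] Delta10_cells[OF assms] Delta11_cells[OF assms]
  by (intro conjI) simp_all

end
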